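(* For any $S_1,S,T_1,T\in\mathfrak S_1(\mathbb T)$ with $S_1\le S$ and $T_1\le T$, $$d(S-S_1,T-T_1)\le d(S_1,T_1)+d(S,T).$$
   Context: A rigged subset $S$ of a set $X$ assigns to each $x$ a multiplicity $\mathrm{mult}(x;S)\in\{0,1,\dots,\infty\}$; $S\le T$ means $\mathrm{mult}(x;S)\le\mathrm{mult}(x;T)$ for all $x$; $S\pm T$ are defined by adding/subtracting multiplicities (difference when $T\le S$). An enumeration is a sequence in which each $x$ appears $\mathrm{mult}(x;S)$ times. $\mathfrak S_\infty(\mathbb T)$ consists of countable rigged subsets of the unit circle $\mathbb T$ (arc-length metric) in which $1$ has multiplicity $\infty$ and with no other accumulation point (counting multiplicity); $d(S,T)=\inf\sum_j\mathrm{dist}(s_j,t_j)$ over enumerations of $S,T$; $\mathfrak S_1(\mathbb T)=\{S: d(S,\mathbf 1)<\infty\}$, $\mathbf 1$ being $1$ with infinite multiplicity. The point $1$ is always regarded as having infinite multiplicity (so differences are again in $\mathfrak S_1(\mathbb T)$). *)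

theory Defs
  imports "HOL-Analysis.Analysis"
begin

text \<open>A rigged subset of the complex plane is a multiplicity function into enat.\<close>
type_synonym rigged = "complex \<Rightarrow> enat"

definition arcdist :: "complex \<Rightarrow> complex \<Rightarrow> real" where
  "arcdist z w = \<bar>Arg (z * cnj w)\<bar>"

definition occ :: "(nat \<Rightarrow> complex) \<Rightarrow> complex \<Rightarrow> enat" where
  "occ s x = (if finite {j. s j = x} then enat (card {j. s j = x}) else \<infinity>)"

definition is_enum :: "rigged \<Rightarrow> (nat \<Rightarrow> complex) \<Rightarrow> bool" where
  "is_enum S s \<longleftrightarrow> (\<forall>x. occ s x = S x)"

definition S_inf :: "rigged \<Rightarrow> bool" where
  "S_inf S \<longleftrightarrow>
     (\<forall>x. S x \<noteq> 0 \<longrightarrow> x \<in> sphere 0 1) \<and>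
     countable {x. S x \<noteq> 0} \<and>
     S 1 = \<infinity> \<and>
     (\<forall>x. x \<noteq> 1 \<longrightarrow>
        (\<exists>e>0. finite {y \<in> ball x e. S y \<noteq> 0} \<and> (\<forall>y\<in>ball x e. S y \<noteq> \<infinity>)))"

definition rdist :: "rigged \<Rightarrow> rigged \<Rightarrow> ennreal" where
  "rdist S T = (INF st \<in> {(s, t). is_enum S s \<and> is_enum T t}.
                  (\<Sum>j. ennreal (arcdist (fst st j) (snd st j))))"

definition one_rigged :: rigged where
  "one_rigged = (\<lambda>x. if x = 1 then \<infinity> else 0)"

definition S_one :: "rigged \<Rightarrow> bool" where
  "S_one S \<longleftrightarrow> S_inf S \<and> rdist S one_rigged < \<infinity>"

text \<open>Difference (for T \<le> S), with 1 always of infinite multiplicity.\<close>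
definition rdiff :: "rigged \<Rightarrow> rigged \<Rightarrow> rigged" where
  "rdiff S T = (\<lambda>x. if x = 1 then \<infinity> else S x - T x)"

end

theory Submission
  imports Defs
begin

text \<open>
  Fix enumerations \<open>s1, t1\<close> of \<open>S1, T1\<close>. The first \<open>N\<close> pairs \<open>(s1 j, t1 j)\<close> can be deleted
  from \<open>S\<close> and \<open>T\<close> one at a time: in a pair of enumerations of \<open>S, T\<close>, permute the second so
  that the copy of \<open>t1 j\<close> sits opposite the copy of \<open>s1 j\<close> and move both to \<open>1\<close>; by the
  triangle inequality this costs at most \<open>d(s1 j, t1 j)\<close>. The remaining points \<open>s1 j, t1 j\<close>
  with \<open>j \<ge> N\<close> are simply moved to \<open>1\<close>, which costs their distance to \<open>1\<close>. As
  \<open>S1, T1 \<in> \<frak>S\<^sub>1\<close>, these tails tend to \<open>0\<close> for \<open>N \<rightarrow> \<infinity>\<close>.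
\<close>

section \<open>Arc distance\<close>

lemma abs_Arg_mult_le: "\<bar>Arg (a * b)\<bar> \<le> \<bar>Arg a\<bar> + \<bar>Arg b\<bar>"
proof (cases "a = 0 \<or> b = 0")
  case True
  then show ?thesis by auto
next
  case False
  define x where "x = Arg a + Arg b"
  have "-pi < Arg a" "Arg a \<le> pi" "-pi < Arg b" "Arg b \<le> pi"
    using mpi_less_Arg Arg_le_pi by auto
  moreover have "Arg (a * b) = x + (if x \<in> {-pi<..pi} then 0 else if x > pi then -2*pi else 2*pi)"
    using Arg_times'[of a b] False unfolding x_def by simp
  ultimately show ?thesis
    unfolding x_def by (simp split: if_splits)
qed

lemma arcdist_nonneg: "0 \<le> arcdist z w"
  by (simp add: arcdist_def)

lemma arcdist_commute: "arcdist z w = arcdist w z"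
proof -
  have abs_Arg_cnj: "\<bar>Arg (cnj x)\<bar> = \<bar>Arg x\<bar>" for x
    by (simp add: Arg_cnj)
  have "w * cnj z = cnj (z * cnj w)"
    by simp
  then show ?thesis
    unfolding arcdist_def by (simp only: abs_Arg_cnj)
qed

lemma arcdist_self [simp]: "arcdist z z = 0"
proof -
  have "Arg (of_real ((norm z)\<^sup>2)) = 0"
    by (simp only: Arg_of_real) simp
  then show ?thesis
    unfolding arcdist_def by (simp only: complex_norm_square)
qed

text \<open>Since \<open>Arg 0 = 0\<close>, every point has arc distance \<open>0\<close> to \<open>0\<close>; hence \<open>w \<noteq> 0\<close>.\<close>

lemma arcdist_triangle:
  assumes "w \<noteq> 0"
  shows "arcdist z u \<le> arcdist z w + arcdist w u"
proof -
  have "z * cnj u * of_real ((norm w)\<^sup>2) = (z * cnj w) * (w * cnj u)"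
    by (simp only: complex_norm_square mult_ac)
  moreover have "Arg (z * cnj u * of_real ((norm w)\<^sup>2)) = Arg (z * cnj u)"
    using assms by (intro Arg_times_of_real2) simp
  ultimately show ?thesis
    unfolding arcdist_def using abs_Arg_mult_le by metis
qed

section \<open>Counting occurrences\<close>

definition occ_on :: "nat set \<Rightarrow> (nat \<Rightarrow> 'a) \<Rightarrow> 'a \<Rightarrow> enat" where
  "occ_on D s x = (if finite {j\<in>D. s j = x} then enat (card {j\<in>D. s j = x}) else \<infinity>)"

lemma occ_on_UNIV [simp]: "occ_on UNIV s x = occ s x"
  by (simp add: occ_on_def occ_def)

lemma occ_eq_infinity_iff: "occ s x = \<infinity> \<longleftrightarrow> infinite {j. s j = x}"
  by (simp add: occ_def)

lemma occ_on_cong: "{j\<in>A. s j = x} = {j\<in>B. t j = x} \<Longrightarrow> occ_on A s x = occ_on B t x"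
  by (simp add: occ_on_def)

lemma occ_on_Un:
  assumes "A \<inter> B = {}"
  shows "occ_on (A \<union> B) s x = occ_on A s x + occ_on B s x"
proof -
  have split: "{j\<in>A \<union> B. s j = x} = {j\<in>A. s j = x} \<union> {j\<in>B. s j = x}"
    by auto
  show ?thesis
  proof (cases "finite {j\<in>A. s j = x} \<and> finite {j\<in>B. s j = x}")
    case True
    moreover have "{j\<in>A. s j = x} \<inter> {j\<in>B. s j = x} = {}"
      using assms by auto
    ultimately show ?thesis
      unfolding occ_on_def split by (simp add: card_Un_disjoint)
  next
    case False
    then show ?thesis
      unfolding occ_on_def split by auto
  qed
qed

lemma occ_on_mono: "A \<subseteq> B \<Longrightarrow> occ_on A s x \<le> occ_on B s x"
  using occ_on_Un[of A "B - A" s x] by (simp add: Un_absorb1)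

lemma occ_on_finite: "finite D \<Longrightarrow> occ_on D s x \<noteq> \<infinity>"
  by (simp add: occ_on_def)

lemma occ_on_singleton: "occ_on {n} s x = (if s n = x then 1 else 0)"
proof -
  have "{j\<in>{n}. s j = x} = (if s n = x then {n} else {})"
    by auto
  then show ?thesis
    by (simp add: occ_on_def one_enat_def zero_enat_def)
qed

lemma occ_on_image:
  assumes "inj_on \<phi> D" and "\<And>j. j \<in> D \<Longrightarrow> u (\<phi> j) = r j"
  shows "occ_on (\<phi> ` D) u x = occ_on D r x"
proof -
  have "{m\<in>\<phi> ` D. u m = x} = \<phi> ` {j\<in>D. r j = x}"
    using assms(2) by auto
  moreover have "inj_on \<phi> {j\<in>D. r j = x}"
    using assms(1) by (rule inj_on_subset) auto
  ultimately show ?thesis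
    by (simp add: occ_on_def card_image finite_image_iff)
qed

lemma ex_inj_on_occ_match:
  assumes "\<And>x. occ_on D r x \<le> occ_on UNIV u x"
  shows "\<exists>\<phi>. inj_on \<phi> D \<and> (\<forall>j\<in>D. u (\<phi> j) = r j)"
proof -
  define F where "F x = {j\<in>D. r j = x}" for x
  define G where "G x = {m. u m = x}" for x
  have "\<exists>g. inj_on g (F x) \<and> g ` F x \<subseteq> G x" for x
  proof (cases "finite (G x)")
    case False
    have "inj_on (enumerate (G x)) (F x)"
      using inj_enumerate[OF False] by (rule inj_on_subset) simp
    moreover have "enumerate (G x) ` F x \<subseteq> G x"
      using enumerate_in_set[OF False] by blast
    ultimately show ?thesis
      by blast
  next
    case True
    then have "finite (F x) \<and> card (F x) \<le> card (G x)"
      using assms[of x] by (simp add: occ_on_def F_def G_def split: if_splits)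
    then show ?thesis
      using card_le_inj True by blast
  qed
  then obtain g where g: "\<And>x. inj_on (g x) (F x)" "\<And>x. g x ` F x \<subseteq> G x"
    by metis
  define \<phi> where "\<phi> j = g (r j) j" for j
  have match: "u (\<phi> j) = r j" if "j \<in> D" for j
    using g(2)[of "r j"] that by (auto simp: \<phi>_def F_def G_def)
  have "inj_on \<phi> D"
  proof (rule inj_onI)
    fix j j' assume "j \<in> D" "j' \<in> D" "\<phi> j = \<phi> j'"
    moreover have "r j = r j'"
      using match calculation by metis
    ultimately show "j = j'"
      using g(1)[of "r j"] by (auto simp: \<phi>_def F_def dest: inj_onD)
  qed
  with match show ?thesis
    by blast
qed

lemma is_enum_support:
  assumes "is_enum U u"
  shows "U (u j) \<noteq> 0"
proof -
  have "j \<in> {i. u i = u j}"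
    by simp
  then have "occ u (u j) \<noteq> 0"
    unfolding occ_def zero_enat_def by (auto simp: card_eq_0_iff)
  with assms show ?thesis
    by (simp add: is_enum_def)
qed

lemma is_enum_obtain_index:
  assumes "is_enum U u" and "U x \<noteq> 0"
  obtains i where "u i = x"
proof -
  have "occ u x \<noteq> 0"
    using assms by (simp add: is_enum_def)
  then have "{i. u i = x} \<noteq> {}"
    by (intro notI) (simp add: occ_def zero_enat_def)
  with that show ?thesis
    by blast
qed

lemma is_enum_comp_bij:
  assumes "is_enum U u" and "bij p"
  shows "is_enum U (u \<circ> p)"
proof -
  have "occ (u \<circ> p) x = occ u x" for x
  proof -
    have "{j. (u \<circ> p) j = x} = inv p ` {j. u j = x}"
      using bij_vimage_eq_inv_image[OF assms(2), of "{j. u j = x}"] by (simp add: vimage_def)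
    moreover have "inj_on (inv p) A" for A
      using bij_is_inj[OF bij_imp_bij_inv[OF assms(2)]] inj_on_subset by blast
    ultimately show ?thesis
      by (simp add: occ_def card_image finite_image_iff)
  qed
  with assms(1) show ?thesis
    by (simp add: is_enum_def)
qed

lemma suminf_comp_enum_le:
  fixes f :: "complex \<Rightarrow> ennreal"
  assumes s: "is_enum S s" and a: "is_enum S a"
  shows "(\<Sum>j. f (s j)) \<le> (\<Sum>m. f (a m))"
proof -
  have occ_le: "occ_on UNIV s x \<le> occ_on UNIV a x" for x
    using s a by (simp add: is_enum_def)
  obtain \<phi> where \<phi>: "inj \<phi>" "\<And>j. a (\<phi> j) = s j"
    using ex_inj_on_occ_match[OF occ_le] by blast
  have "(\<Sum>j. f (s j)) = (\<integral>\<^sup>+j. f (a (\<phi> j)) \<partial>count_space UNIV)"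
    by (simp add: nn_integral_count_space_nat \<phi>(2))
  also have "\<dots> = (\<integral>\<^sup>+m. f (a m) \<partial>count_space (range \<phi>))"
    by (rule nn_integral_bij_count_space) (rule inj_on_imp_bij_betw[OF \<phi>(1)])
  also have "\<dots> = (\<integral>\<^sup>+m. f (a m) * indicator (range \<phi>) m \<partial>count_space UNIV)"
    by (rule nn_integral_count_space_indicator) simp
  also have "\<dots> \<le> (\<integral>\<^sup>+m. f (a m) \<partial>count_space UNIV)"
    by (intro nn_integral_mono) (simp add: indicator_def)
  finally show ?thesis
    by (simp add: nn_integral_count_space_nat)
qed

section \<open>Removing points from a rigged set\<close>

definition remove_occ :: "rigged \<Rightarrow> nat set \<Rightarrow> (nat \<Rightarrow> complex) \<Rightarrow> rigged" where
  "remove_occ U D r = (\<lambda>x. if x = 1 then \<infinity> else U x - occ_on D r x)"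

text \<open>The part of \<open>S_inf\<close> the argument needs; \<open>U 0 = 0\<close> keeps the junk point \<open>0\<close> out of
  every enumeration.\<close>

definition admissible :: "rigged \<Rightarrow> bool" where
  "admissible U \<longleftrightarrow> U 1 = \<infinity> \<and> U 0 = 0 \<and> (\<forall>z. z \<noteq> 1 \<longrightarrow> U z \<noteq> \<infinity>)"

lemma S_inf_imp_admissible:
  assumes "S_inf S"
  shows "admissible S"
proof -
  have "S 0 = 0"
    using assms unfolding S_inf_def by fastforce
  moreover have "S z \<noteq> \<infinity>" if "z \<noteq> 1" for z
    using assms that unfolding S_inf_def by (meson centre_in_ball)
  ultimately show ?thesis
    using assms by (simp add: admissible_def S_inf_def)
qed

lemma admissible_remove_occ:
  assumes "admissible U"
  shows "admissible (remove_occ U D r)"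
proof -
  have "c - a \<noteq> \<infinity>" if "c \<noteq> \<infinity>" for a c :: enat
    using that by (cases a; cases c) auto
  with assms show ?thesis
    by (simp add: admissible_def remove_occ_def)
qed

lemma rdiff_eq_remove_occ: "is_enum S1 s1 \<Longrightarrow> rdiff S S1 = remove_occ S UNIV s1"
  by (simp add: rdiff_def remove_occ_def is_enum_def fun_eq_iff)

lemma remove_occ_empty: "U 1 = \<infinity> \<Longrightarrow> remove_occ U {} r = U"
  by (auto simp: remove_occ_def occ_on_def zero_enat_def)

lemma remove_occ_Un:
  assumes "A \<inter> B = {}" and "finite A"
  shows "remove_occ (remove_occ U A r) B r = remove_occ U (A \<union> B) r"
proof -
  have diff_diff: "c - a - b = c - (a + b)" if "a \<noteq> \<infinity>" for a b c :: enat
    using that by (cases a; cases b; cases c) auto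
  show ?thesis
    unfolding remove_occ_def fun_eq_iff
    using assms by (simp add: occ_on_Un diff_diff[OF occ_on_finite])
qed

lemma remove_occ_singleton: "U 1 = \<infinity> \<Longrightarrow> remove_occ U {n} r = U(r n := U (r n) - 1)"
  by (auto simp: remove_occ_def occ_on_singleton)

lemma remove_occ_lessThan_Suc:
  assumes "admissible U"
  shows "remove_occ U {..<Suc N} r
           = (remove_occ U {..<N} r)(r N := remove_occ U {..<N} r (r N) - 1)"
proof -
  have "remove_occ U {..<Suc N} r = remove_occ (remove_occ U {..<N} r) {N} r"
    by (simp add: remove_occ_Un lessThan_Suc)
  also have "\<dots> = (remove_occ U {..<N} r)(r N := remove_occ U {..<N} r (r N) - 1)"
    using admissible_remove_occ[OF assms] by (simp add: remove_occ_singleton admissible_def)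
  finally show ?thesis .
qed

lemma remove_occ_lessThan_nonzero:
  assumes "admissible U" and "\<And>z. occ r z \<le> U z"
  shows "remove_occ U {..<N} r (r N) \<noteq> 0"
proof (cases "r N = 1")
  case True
  then show ?thesis
    by (simp add: remove_occ_def)
next
  case False
  have split: "{..<Suc N} = {..<N} \<union> {N}"
    by auto
  have "occ_on {..<N} r (r N) + 1 = occ_on {..<Suc N} r (r N)"
    unfolding split by (subst occ_on_Un) (auto simp: occ_on_singleton)
  also have "\<dots> \<le> U (r N)"
    using occ_on_mono[of "{..<Suc N}" UNIV r "r N"] assms(2)[of "r N"] by simp
  finally show ?thesis
    using False occ_on_finite[of "{..<N}" r "r N"]
    by (cases "U (r N)") (auto simp: remove_occ_def one_enat_def zero_enat_def)
qed

lemma occ_on_le_remove_occ: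
  assumes "A \<inter> B = {}" and "finite A" and "occ_on (A \<union> B) r z \<le> U z"
  shows "occ_on B r z \<le> remove_occ U A r z"
proof -
  have diff: "b \<le> c - a" if "a + b \<le> c" "a \<noteq> \<infinity>" for a b c :: enat
    using that by (cases a; cases b; cases c) auto
  have "occ_on A r z + occ_on B r z \<le> U z"
    using assms(3) unfolding occ_on_Un[OF assms(1)] .
  from diff[OF this occ_on_finite[OF assms(2)]] show ?thesis
    by (simp add: remove_occ_def)
qed

lemma is_enum_replace_one:
  assumes enum: "is_enum U u" and "admissible U"
  shows "is_enum (remove_occ U M u) (\<lambda>m. if m \<in> M then 1 else u m)"
  unfolding is_enum_def
proof
  fix x
  let ?u' = "\<lambda>m. if m \<in> M then 1 else u m"
  show "occ ?u' x = remove_occ U M u x"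
  proof (cases "x = 1")
    case True
    have "infinite {m. u m = 1}"
      using enum \<open>admissible U\<close> by (simp add: is_enum_def admissible_def flip: occ_eq_infinity_iff)
    moreover have "{m. u m = 1} \<subseteq> {m. ?u' m = x}"
      using True by auto
    ultimately have "infinite {m. ?u' m = x}"
      using finite_subset by blast
    with True show ?thesis
      by (simp add: occ_def remove_occ_def)
  next
    case False
    have "occ_on UNIV ?u' x = occ_on (- M) u x"
      by (rule occ_on_cong) (use False in auto)
    moreover have "U x = occ_on M u x + occ_on (- M) u x"
      using enum occ_on_Un[of M "- M" u x] by (simp add: is_enum_def)
    moreover have "occ_on M u x \<noteq> \<infinity>"
      using calculation(2) \<open>admissible U\<close> False by (metis admissible_def plus_eq_infty_iff_enat)
    ultimately show ?thesis
      using False by (cases "occ_on M u x"; cases "occ_on (- M) u x") (auto simp: remove_occ_def)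
  qed
qed

lemma ennreal_le_add_Inf:
  fixes X c :: ennreal
  assumes "\<And>a. a \<in> A \<Longrightarrow> X \<le> c + a"
  shows "X \<le> c + Inf A"
proof (cases "A = {}")
  case True
  then show ?thesis
    by simp
next
  case False
  have "c + Inf A = (INF a\<in>A. c + a)"
    by (rule continuous_at_Inf_mono)
      (use False in \<open>auto simp: mono_def add_left_mono intro: continuous_add continuous_ident continuous_const\<close>)
  with assms show ?thesis
    by (simp add: le_INF_iff)
qed

definition cost :: "(nat \<Rightarrow> complex) \<Rightarrow> (nat \<Rightarrow> complex) \<Rightarrow> ennreal" where
  "cost s t = (\<Sum>j. ennreal (arcdist (s j) (t j)))"

lemma cost_commute: "cost s t = cost t s"
  by (simp add: cost_def arcdist_commute)

lemma rdist_le_cost: "is_enum S s \<Longrightarrow> is_enum T t \<Longrightarrow> rdist S T \<le> cost s t"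
  unfolding rdist_def cost_def by (rule INF_lower2[of "(s, t)"]) auto

lemma le_rdist_add:
  assumes "\<And>u v. is_enum U u \<Longrightarrow> is_enum V v \<Longrightarrow> X \<le> cost u v + c"
  shows "X \<le> rdist U V + c"
proof -
  have "X \<le> c + rdist U V"
    unfolding rdist_def using assms by (intro ennreal_le_add_Inf) (auto simp: cost_def add.commute)
  then show ?thesis
    by (simp add: add.commute)
qed

lemma rdist_commute: "rdist S T = rdist T S"
proof -
  have le: "rdist T S \<le> rdist S T" for S T
  proof -
    have "rdist T S \<le> rdist S T + 0"
    proof (rule le_rdist_add)
      fix u v
      assume "is_enum S u" "is_enum T v"
      then show "rdist T S \<le> cost u v + 0"
        using rdist_le_cost[of T v S u] by (simp add: cost_commute)
    qed
    then show ?thesis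
      by simp
  qed
  show ?thesis
    using le[of S T] le[of T S] by simp
qed

section \<open>Removing matched pairs\<close>

lemma suminf_single_ennreal: "(\<Sum>j. if j = i then a else 0) = (a :: ennreal)"
  using sums_single[of i "\<lambda>_. a"] by (simp add: sums_iff)

text \<open>Swap \<open>v\<close> so that \<open>y\<close> sits opposite \<open>x\<close> at position \<open>i\<close>, and send both to \<open>1\<close>.
  The pair displaced to position \<open>k\<close> costs at most \<open>c k + c i + d\<close> by two triangle inequalities.\<close>

lemma cost_swap_replace_le:
  assumes "u i = x" and "v k = y" and "x \<noteq> 0" and "y \<noteq> 0"
  shows "cost (u(i := 1)) ((v \<circ> Transposition.transpose i k)(i := 1))
           \<le> cost u v + ennreal (arcdist x y)"
proof -
  define c where "c j = ennreal (arcdist (u j) (v j))" for j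
  define d where "d = ennreal (arcdist x y)"
  define rest where "rest j = (if j = i then 0 else c j)" for j
  have pointwise: "ennreal (arcdist ((u(i := 1)) j) (((v \<circ> Transposition.transpose i k)(i := 1)) j))
      \<le> rest j + (if j = k then c i + d else 0)" for j
  proof (cases "j = i \<or> j \<noteq> k")
    case True
    then show ?thesis
      by (auto simp: rest_def c_def)
  next
    case False
    have "arcdist (u k) (v i) \<le> arcdist (u k) y + arcdist y (v i)"
      using assms(4) by (rule arcdist_triangle)
    also have "\<dots> \<le> arcdist (u k) y + (arcdist y x + arcdist x (v i))"
      using assms(3) arcdist_triangle by simp
    finally have "ennreal (arcdist (u k) (v i)) \<le> c k + (c i + d)"
      using assms(1,2) arcdist_nonneg
      by (simp add: c_def d_def arcdist_commute ennreal_plus[symmetric] del: ennreal_plus ennreal_plus_if)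
    with False show ?thesis
      by (simp add: rest_def)
  qed
  have "(\<Sum>j. rest j) + c i = cost u v"
  proof -
    have "(\<Sum>j. rest j) + (\<Sum>j. if j = i then c i else 0) = (\<Sum>j. rest j + (if j = i then c i else 0))"
      by (rule suminf_add) auto
    also have "(\<lambda>j. rest j + (if j = i then c i else 0)) = c"
      by (auto simp: rest_def)
    finally show ?thesis
      by (simp add: suminf_single_ennreal cost_def c_def)
  qed
  have "cost (u(i := 1)) ((v \<circ> Transposition.transpose i k)(i := 1))
      \<le> (\<Sum>j. rest j + (if j = k then c i + d else 0))"
    unfolding cost_def by (intro suminf_le pointwise) auto
  also have "\<dots> = (\<Sum>j. rest j) + (c i + d)"
    by (simp add: suminf_add[symmetric] suminf_single_ennreal)
  also have "\<dots> = cost u v + d"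
    using \<open>(\<Sum>j. rest j) + c i = cost u v\<close> by (simp add: add.assoc[symmetric])
  finally show ?thesis
    by (simp add: d_def)
qed

lemma rdist_remove_pair_le:
  assumes U: "admissible U" and V: "admissible V" and "U x \<noteq> 0" and "V y \<noteq> 0"
  shows "rdist (U(x := U x - 1)) (V(y := V y - 1)) \<le> rdist U V + ennreal (arcdist x y)"
proof (rule le_rdist_add)
  fix u v
  assume u: "is_enum U u" and v: "is_enum V v"
  obtain i where i: "u i = x"
    using u assms(3) by (rule is_enum_obtain_index)
  obtain k where k: "v k = y"
    using v assms(4) by (rule is_enum_obtain_index)
  define v' where "v' = v \<circ> Transposition.transpose i k"
  have "is_enum (remove_occ U {i} u) (u(i := 1))"
    using is_enum_replace_one[OF u U, of "{i}"] by (simp add: fun_upd_def)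
  moreover have "is_enum (remove_occ V {i} v') (v'(i := 1))"
    using is_enum_replace_one[OF is_enum_comp_bij[OF v] V, of _ "{i}"]
    by (simp add: fun_upd_def v'_def)
  ultimately have "rdist (U(x := U x - 1)) (V(y := V y - 1)) \<le> cost (u(i := 1)) (v'(i := 1))"
    using U V i k by (simp add: admissible_def remove_occ_singleton v'_def rdist_le_cost)
  also have "\<dots> \<le> cost u v + ennreal (arcdist x y)"
    unfolding v'_def using i k
  proof (rule cost_swap_replace_le)
    show "x \<noteq> 0" "y \<noteq> 0"
      using U V assms(3,4) by (auto simp: admissible_def)
  qed
  finally show "rdist (U(x := U x - 1)) (V(y := V y - 1)) \<le> cost u v + ennreal (arcdist x y)" .
qed

lemma rdist_remove_occ_prefix_le:
  assumes S: "admissible S" and T: "admissible T"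
    and "\<And>z. occ s1 z \<le> S z" and "\<And>z. occ t1 z \<le> T z"
  shows "rdist (remove_occ S {..<N} s1) (remove_occ T {..<N} t1)
           \<le> rdist S T + (\<Sum>j<N. ennreal (arcdist (s1 j) (t1 j)))"
proof (induction N)
  case 0
  show ?case
    using S T by (simp add: remove_occ_empty admissible_def)
next
  case (Suc N)
  have "rdist (remove_occ S {..<Suc N} s1) (remove_occ T {..<Suc N} t1)
      \<le> rdist (remove_occ S {..<N} s1) (remove_occ T {..<N} t1) + ennreal (arcdist (s1 N) (t1 N))"
    unfolding remove_occ_lessThan_Suc[OF S] remove_occ_lessThan_Suc[OF T]
    using assms by (intro rdist_remove_pair_le admissible_remove_occ remove_occ_lessThan_nonzero)
  also have "\<dots> \<le> rdist S T + (\<Sum>j<Suc N. ennreal (arcdist (s1 j) (t1 j)))"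
    using Suc.IH by (simp add: add_right_mono add.assoc)
  finally show ?case .
qed

section \<open>Moving points to 1\<close>

lemma cost_replace_one_le:
  assumes "\<And>m. m \<in> M \<Longrightarrow> u m \<noteq> 0"
  shows "cost (\<lambda>m. if m \<in> M then 1 else u m) v
           \<le> cost u v + (\<integral>\<^sup>+m. ennreal (arcdist (u m) 1) \<partial>count_space M)"
proof -
  define w where "w m = ennreal (arcdist (u m) 1) * indicator M m" for m
  have pointwise: "ennreal (arcdist (if m \<in> M then 1 else u m) (v m))
      \<le> ennreal (arcdist (u m) (v m)) + w m" for m
  proof (cases "m \<in> M")
    case True
    have "arcdist 1 (v m) \<le> arcdist (u m) (v m) + arcdist (u m) 1"
      using arcdist_triangle[OF assms[OF True], of 1 "v m"] by (simp add: arcdist_commute)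
    with True show ?thesis
      by (simp add: w_def arcdist_nonneg flip: ennreal_plus)
  next
    case False
    then show ?thesis
      by (simp add: w_def)
  qed
  have "cost (\<lambda>m. if m \<in> M then 1 else u m) v \<le> (\<Sum>m. ennreal (arcdist (u m) (v m)) + w m)"
    unfolding cost_def by (intro suminf_le pointwise) auto
  also have "\<dots> = cost u v + (\<Sum>m. w m)"
    unfolding cost_def by (rule suminf_add[symmetric]) auto
  also have "(\<Sum>m. w m) = (\<integral>\<^sup>+m. ennreal (arcdist (u m) 1) \<partial>count_space M)"
    unfolding w_def nn_integral_count_space_nat[symmetric]
    by (rule nn_integral_count_space_indicator[symmetric]) simp
  finally show ?thesis .
qed

lemma rdist_remove_occ_le:
  assumes U: "admissible U" and le: "\<And>z. occ_on D r z \<le> U z"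
  shows "rdist (remove_occ U D r) V \<le> rdist U V + (\<integral>\<^sup>+j. ennreal (arcdist (r j) 1) \<partial>count_space D)"
proof (rule le_rdist_add)
  fix u v
  assume u: "is_enum U u" and v: "is_enum V v"
  have occ_le: "occ_on D r z \<le> occ_on UNIV u z" for z
    using u le[of z] by (simp add: is_enum_def)
  obtain \<phi> where \<phi>: "inj_on \<phi> D" "\<And>j. j \<in> D \<Longrightarrow> u (\<phi> j) = r j"
    using ex_inj_on_occ_match[OF occ_le] by blast
  have "remove_occ U D r = remove_occ U (\<phi> ` D) u"
    using occ_on_image[of \<phi> D u r, OF \<phi>] by (simp add: remove_occ_def fun_eq_iff)
  then have "rdist (remove_occ U D r) V \<le> cost (\<lambda>m. if m \<in> \<phi> ` D then 1 else u m) v"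
    using rdist_le_cost[OF is_enum_replace_one[OF u U] v] by simp
  also have "\<dots> \<le> cost u v + (\<integral>\<^sup>+m. ennreal (arcdist (u m) 1) \<partial>count_space (\<phi> ` D))"
  proof (rule cost_replace_one_le)
    fix m
    show "u m \<noteq> 0"
      using is_enum_support[OF u, of m] U by (auto simp: admissible_def)
  qed
  also have "(\<integral>\<^sup>+m. ennreal (arcdist (u m) 1) \<partial>count_space (\<phi> ` D))
      = (\<integral>\<^sup>+j. ennreal (arcdist (u (\<phi> j)) 1) \<partial>count_space D)"
    by (rule nn_integral_bij_count_space[symmetric]) (rule inj_on_imp_bij_betw[OF \<phi>(1)])
  also have "\<dots> = (\<integral>\<^sup>+j. ennreal (arcdist (r j) 1) \<partial>count_space D)"
    by (rule nn_integral_cong) (simp add: \<phi>(2))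
  finally show "rdist (remove_occ U D r) V
      \<le> cost u v + (\<integral>\<^sup>+j. ennreal (arcdist (r j) 1) \<partial>count_space D)" .
qed

lemma S_one_suminf_arcdist_one_finite:
  assumes S: "S_one S" and s: "is_enum S s"
  shows "(\<Sum>j. ennreal (arcdist (s j) 1)) < \<infinity>"
proof -
  have "rdist S one_rigged < \<infinity>"
    using S by (simp add: S_one_def)
  then obtain a b where a: "is_enum S a" and b: "is_enum one_rigged b" and "cost a b < \<infinity>"
    unfolding rdist_def INF_less_iff cost_def by auto
  moreover have "b j = 1" for j
    using is_enum_support[OF b, of j] by (simp add: one_rigged_def split: if_splits)
  ultimately have "(\<Sum>m. ennreal (arcdist (a m) 1)) < \<infinity>"
    by (simp add: cost_def)
  then show ?thesis
    using suminf_comp_enum_le[OF s a, of "\<lambda>z. ennreal (arcdist z 1)"] by (simp add: le_less_trans)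
qed

lemma nn_integral_count_space_atLeast_tendsto_0:
  fixes f :: "nat \<Rightarrow> ennreal"
  assumes "(\<Sum>j. f j) < \<infinity>"
  shows "(\<lambda>N. \<integral>\<^sup>+j. f j \<partial>count_space {N..}) \<longlonglongrightarrow> 0"
proof -
  have tail: "(\<integral>\<^sup>+j. f j \<partial>count_space {N..}) = (\<Sum>j. f j) - (\<Sum>j<N. f j)" for N
  proof -
    have "(\<integral>\<^sup>+j. f j \<partial>count_space {N..}) = (\<integral>\<^sup>+i. f (i + N) \<partial>count_space UNIV)"
      by (rule nn_integral_bij_count_space[symmetric]) (rule bij_betwI[where g="\<lambda>j. j - N"], auto)
    also have "\<dots> = (\<Sum>i. f (i + N))"
      by (rule nn_integral_count_space_nat)
    also have "\<dots> = (\<Sum>j. f j) - (\<Sum>j<N. f j)"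
    proof -
      have "(\<Sum>j<N. f j) \<le> (\<Sum>j. f j)"
        by (rule sum_le_suminf) auto
      then have "(\<Sum>j<N. f j) \<noteq> top"
        using assms unfolding infinity_ennreal_def by (intro less_imp_neq) (rule le_less_trans)
      moreover have "(\<Sum>j. f j) = (\<Sum>i. f (i + N)) + (\<Sum>j<N. f j)"
        by (rule suminf_offset) simp
      ultimately show ?thesis
        by simp
    qed
    finally show ?thesis .
  qed
  have "(\<lambda>N. (\<Sum>j. f j) - (\<Sum>j<N. f j)) \<longlonglongrightarrow> (\<Sum>j. f j) - (\<Sum>j. f j)"
    using assms by (intro tendsto_diff_ennreal tendsto_const summable_LIMSEQ) auto
  then show ?thesis
    using assms by (simp add: tail)
qed

lemma rdist_rdiff_le_tails:
  assumes S: "admissible S" and T: "admissible T"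
    and s1: "is_enum S1 s1" and t1: "is_enum T1 t1" and "S1 \<le> S" and "T1 \<le> T"
  shows "rdist (rdiff S S1) (rdiff T T1) \<le> rdist S T + cost s1 t1
           + ((\<integral>\<^sup>+j. ennreal (arcdist (s1 j) 1) \<partial>count_space {N..})
              + (\<integral>\<^sup>+j. ennreal (arcdist (t1 j) 1) \<partial>count_space {N..}))"
    (is "_ \<le> _ + _ + (?tail_s1 + ?tail_t1)")
proof -
  let ?PS = "remove_occ S {..<N} s1" and ?PT = "remove_occ T {..<N} t1"
  have partition: "{..<N} \<inter> {N..} = {}" "{..<N} \<union> {N..} = UNIV"
    by auto
  have occ_s1: "occ s1 z \<le> S z" and occ_t1: "occ t1 z \<le> T z" for z
    using s1 t1 assms(5,6) by (auto simp: is_enum_def le_fun_def)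
  have RS: "rdiff S S1 = remove_occ ?PS {N..} s1" and RT: "rdiff T T1 = remove_occ ?PT {N..} t1"
    using rdiff_eq_remove_occ[OF s1] rdiff_eq_remove_occ[OF t1] by (simp_all add: remove_occ_Un partition)
  have "rdist (rdiff S S1) (rdiff T T1) \<le> rdist ?PS (rdiff T T1) + ?tail_s1"
    unfolding RS using occ_s1 partition
    by (simp add: rdist_remove_occ_le admissible_remove_occ[OF S] occ_on_le_remove_occ)
  also have "rdist ?PS (rdiff T T1) = rdist (rdiff T T1) ?PS"
    by (rule rdist_commute)
  also have "\<dots> \<le> rdist ?PT ?PS + ?tail_t1"
    unfolding RT using occ_t1 partition
    by (simp add: rdist_remove_occ_le admissible_remove_occ[OF T] occ_on_le_remove_occ)
  also have "rdist ?PT ?PS \<le> rdist S T + (\<Sum>j<N. ennreal (arcdist (s1 j) (t1 j)))"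
    using rdist_remove_occ_prefix_le[OF S T occ_s1 occ_t1] by (simp add: rdist_commute)
  also have "(\<Sum>j<N. ennreal (arcdist (s1 j) (t1 j))) \<le> cost s1 t1"
    unfolding cost_def by (rule sum_le_suminf) auto
  finally show ?thesis
    by (simp add: add_mono ac_simps)
qed

lemma rdist_rdiff_le_cost:
  assumes "S_one S1" and "S_one T1" and "admissible S" and "admissible T"
    and "S1 \<le> S" and "T1 \<le> T" and s1: "is_enum S1 s1" and t1: "is_enum T1 t1"
  shows "rdist (rdiff S S1) (rdiff T T1) \<le> rdist S T + cost s1 t1"
proof -
  let ?tail = "\<lambda>r N. \<integral>\<^sup>+j. ennreal (arcdist (r j) 1) \<partial>count_space {N..}"
  have "(\<lambda>N. ?tail s1 N + ?tail t1 N) \<longlonglongrightarrow> 0 + 0"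
    using assms by (intro tendsto_add nn_integral_count_space_atLeast_tendsto_0 S_one_suminf_arcdist_one_finite)
  then have "(\<lambda>N. rdist S T + cost s1 t1 + (?tail s1 N + ?tail t1 N)) \<longlonglongrightarrow> rdist S T + cost s1 t1"
    using tendsto_add[OF tendsto_const] by fastforce
  then show ?thesis
    using assms by (intro LIMSEQ_le_const) (auto intro: rdist_rdiff_le_tails)
qed

theorem mainTheorem6:
  fixes S1 S T1 T :: rigged
  assumes "S_one S1" and "S_one S" and "S_one T1" and "S_one T"
    and "S1 \<le> S" and "T1 \<le> T"
  shows "rdist (rdiff S S1) (rdiff T T1) \<le> rdist S1 T1 + rdist S T"
proof -
  have "admissible S" "admissible T"
    using assms(2,4) by (simp_all add: S_one_def S_inf_imp_admissible)
  then show ?thesis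
    using assms by (intro le_rdist_add) (simp add: rdist_rdiff_le_cost add.commute)
qed

end
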